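(* Let $(S,\mathsf d)$ be a complete separable metric space and $\mathbf p$ a Borel probability measure on it. For $\varepsilon>0$ and $k\in\mathbb{N}_0$ we have $0\le p_{\varepsilon,k}\le1$, $p_{\varepsilon,0}=0$, $p_{\varepsilon,1}=\int_S\mathbf p(B(x,\varepsilon))\,d\mathbf p(x)$, and $\lim_{k\to\infty}p_{\varepsilon,k}=1$. Moreover, $\operatorname{supp}\mathbf p$ is compact if and only if \[\underline{\mathbf p}_\varepsilon:=\inf_{x\in\operatorname{supp}\mathbf p}\mathbf p(B(x,\varepsilon))>0\quad\text{for every }\varepsilon>0,\] and in this case $p_{\varepsilon,k}\ge1-(1-\underline{\mathbf p}_\varepsilon)^k$, so $p_{\varepsilon,k}\to1$ exponentially fast as $k\to\infty$.
   Context: $B(x,\varepsilon):=\{y:\mathsf d(x,y)<\varepsilon\}$. The $(\varepsilon,k)$-subcovering probability is $p_{\varepsilon,k}:=\mathbb P\big(X\in\bigcup_{i=1}^kB(X_i,\varepsilon)\big)$, where $X,X_1,\dots,X_k$ are i.i.d. with law $\mathbf p$ (the union is empty for $k=0$). *)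

theory Defs
  imports "HOL-Probability.Probability"
begin

text \<open>(eps,k)-subcovering probability: P(X in the union of B(X_i,eps), i=1..k),
  X = coordinate 0, X_1..X_k = coordinates 1..k of the i.i.d. product measure.\<close>
definition subcov_prob :: "'a::metric_space measure \<Rightarrow> real \<Rightarrow> nat \<Rightarrow> real" where
  "subcov_prob M \<epsilon> k =
     measure (PiM {0..k} (\<lambda>_. M)) {\<omega> \<in> space (PiM {0..k} (\<lambda>_. M)). \<exists>i\<in>{1..k}. \<omega> 0 \<in> ball (\<omega> i) \<epsilon>}"

definition supp :: "'a::metric_space measure \<Rightarrow> 'a set" where
  "supp M = {x. \<forall>e>0. measure M (ball x e) > 0}"

definition inf_ball_mass :: "'a::metric_space measure \<Rightarrow> real \<Rightarrow> real" where
  "inf_ball_mass M \<epsilon> = (INF x\<in>supp M. measure M (ball x \<epsilon>))"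

end

(*
  Conditioning on the centre X = x, the k independent points X_i all miss B(x,eps) with
  probability (1 - p(B(x,eps)))^k, so p_{eps,k} is the integral of 1 - (1 - p(B(x,eps)))^k.
  Almost every x lies in the support, where p(B(x,eps)) > 0, so dominated convergence gives
  the limit 1, and bounding p(B(x,eps)) from below by its infimum over the support gives the
  exponential bound.

  If the support is compact, finitely many eps/2-balls centred in it cover it, and each
  eps-ball centred in the support contains one of them. Conversely, if every eps/2-ball
  centred in the support has mass at least d > 0, then an eps-separated subset of the support
  has at most 1/d points, so a maximal one is a finite eps-net; being closed in a complete
  space, the support is then compact.
*)
theory Submission
  imports Defs
begin

lemma closed_supp:
  fixes M :: "'a::metric_space measure"
  assumes "finite_measure M" and "sets M = sets borel"
  shows "closed (supp M)"
proof -
  interpret finite_measure M by fact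
  have ball_sets: "ball x r \<in> sets M" for x r
    using assms(2) by simp
  have "\<exists>r>0. ball x r \<subseteq> - supp M" if x: "x \<notin> supp M" for x
  proof -
    obtain r where "r > 0" and null: "measure M (ball x r) \<le> 0"
      using x by (auto simp: supp_def not_less)
    have "y \<notin> supp M" if "y \<in> ball x (r/2)" for y
    proof -
      have "ball y (r/2) \<subseteq> ball x r"
        using that by auto metric
      then have "measure M (ball y (r/2)) \<le> 0"
        using null finite_measure_mono[OF _ ball_sets] by (meson order.trans)
      then show ?thesis
        using \<open>r > 0\<close> by (auto simp: supp_def not_less intro!: exI[of _ "r/2"])
    qed
    then show ?thesis
      using \<open>r > 0\<close> by (intro exI[of _ "r/2"]) auto
  qed
  then show ?thesis
    unfolding closed_def open_contains_ball by blast
qed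

lemma AE_in_supp:
  fixes M :: "'a::{metric_space, second_countable_topology} measure"
  assumes "finite_measure M" and "sets M = sets borel"
  shows "AE x in M. x \<in> supp M"
proof -
  interpret finite_measure M by fact
  obtain B :: "'a set set" where "countable B" and basis: "topological_basis B"
    using ex_countable_basis by blast
  define Z where "Z = {b \<in> B. measure M b = 0}"
  have null_union: "(\<Union>b\<in>Z. b) \<in> null_sets M"
  proof (rule null_sets_UN')
    show "countable Z"
      using \<open>countable B\<close> by (simp add: Z_def)
    show "b \<in> null_sets M" if "b \<in> Z" for b
      using that topological_basis_open[OF basis] assms(2)
      by (auto simp: Z_def emeasure_eq_measure null_setsI)
  qed
  have "x \<in> (\<Union>b\<in>Z. b)" if x: "x \<notin> supp M" for x
  proof -
    obtain r where "r > 0" and null: "measure M (ball x r) \<le> 0"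
      using x by (auto simp: supp_def not_less)
    then obtain b where "b \<in> B" "x \<in> b" "b \<subseteq> ball x r"
      by (meson basis centre_in_ball open_ball topological_basisE)
    moreover have "measure M b \<le> measure M (ball x r)"
      using \<open>b \<subseteq> ball x r\<close> assms(2) by (intro finite_measure_mono) auto
    ultimately show ?thesis
      using null by (auto simp: Z_def intro!: antisym)
  qed
  then show ?thesis
    by (intro AE_I'[OF null_union]) blast
qed

lemma supp_nonempty:
  fixes M :: "'a::{metric_space, second_countable_topology} measure"
  assumes "prob_space M" and "sets M = sets borel"
  shows "supp M \<noteq> {}"
proof -
  interpret prob_space M by fact
  show ?thesis
    using AE_in_supp[OF finite_measure assms(2)] by auto
qed

lemma inf_ball_mass_le:
  assumes "x \<in> supp M"
  shows "inf_ball_mass M e \<le> measure M (ball x e)"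
  unfolding inf_ball_mass_def by (rule cINF_lower[OF bdd_belowI2[of _ 0] assms]) simp

lemma compact_supp_imp_inf_ball_mass_pos:
  fixes M :: "'a::metric_space measure"
  assumes "finite_measure M" and "sets M = sets borel"
    and "compact (supp M)" and "supp M \<noteq> {}" and "e > 0"
  shows "inf_ball_mass M e > 0"
proof -
  interpret finite_measure M by fact
  have "supp M \<subseteq> (\<Union>t\<in>supp M. ball t (e/2))"
    using \<open>e > 0\<close> by auto
  then obtain T where "T \<subseteq> supp M" "finite T" and cover: "supp M \<subseteq> (\<Union>t\<in>T. ball t (e/2))"
    using compactE_image[OF assms(3), of "supp M" "\<lambda>t. ball t (e/2)"] by auto
  then have "T \<noteq> {}"
    using assms(4) by auto
  define d where "d = Min ((\<lambda>t. measure M (ball t (e/2))) ` T)"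
  have "d > 0"
    unfolding d_def using \<open>T \<subseteq> supp M\<close> \<open>finite T\<close> \<open>T \<noteq> {}\<close> \<open>e > 0\<close>
    by (subst Min_gr_iff) (auto simp: supp_def)
  have "d \<le> measure M (ball y e)" if y: "y \<in> supp M" for y
  proof -
    obtain t where "t \<in> T" and "y \<in> ball t (e/2)"
      using cover y by auto
    then have "ball t (e/2) \<subseteq> ball y e"
      by auto metric
    then have "measure M (ball t (e/2)) \<le> measure M (ball y e)"
      using assms(2) by (intro finite_measure_mono) auto
    moreover have "d \<le> measure M (ball t (e/2))"
      unfolding d_def using \<open>finite T\<close> \<open>t \<in> T\<close> by simp
    ultimately show ?thesis
      by linarith
  qed
  then have "d \<le> inf_ball_mass M e"
    unfolding inf_ball_mass_def by (intro cINF_greatest assms(4))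
  with \<open>d > 0\<close> show ?thesis
    by linarith
qed

lemma finite_ball_cover_if_separated_card_bounded:
  fixes S :: "'a::metric_space set"
  assumes "e > 0"
    and "\<And>F. finite F \<Longrightarrow> F \<subseteq> S \<Longrightarrow> pairwise (\<lambda>x y. e \<le> dist x y) F \<Longrightarrow> card F \<le> n"
  shows "\<exists>K. finite K \<and> S \<subseteq> (\<Union>x\<in>K. ball x e)"
proof -
  define separated where
    "separated F \<longleftrightarrow> finite F \<and> F \<subseteq> S \<and> pairwise (\<lambda>x y. e \<le> dist x y) F" for F
  have "\<exists>m. (\<exists>F. separated F \<and> card F = m) \<and> (\<forall>m'. (\<exists>F. separated F \<and> card F = m') \<longrightarrow> m' \<le> m)"
  proof (rule Nat.ex_has_greatest_nat[where k=0 and b=n])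
    show "\<exists>F. separated F \<and> card F = 0"
      by (intro exI[of _ "{}"]) (simp add: separated_def)
    show "\<forall>m. (\<exists>F. separated F \<and> card F = m) \<longrightarrow> m \<le> n"
      using assms(2) by (auto simp: separated_def)
  qed
  then obtain F where F: "separated F" and maximal: "\<And>G. separated G \<Longrightarrow> card G \<le> card F"
    by blast
  have "y \<in> (\<Union>x\<in>F. ball x e)" if "y \<in> S" for y
  proof (rule ccontr)
    assume "y \<notin> (\<Union>x\<in>F. ball x e)"
    then have far: "e \<le> dist x y" if "x \<in> F" for x
      using that by (auto simp: not_less)
    then have "y \<notin> F"
      using \<open>e > 0\<close> by force
    have "separated (insert y F)"
      using F \<open>y \<in> S\<close> far by (auto simp: separated_def pairwise_insert dist_commute)
    then have "card (insert y F) \<le> card F"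
      by (rule maximal)
    with F \<open>y \<notin> F\<close> show False
      by (simp add: separated_def)
  qed
  with F show ?thesis
    unfolding separated_def by blast
qed

lemma card_separated_subset_supp_le:
  fixes M :: "'a::metric_space measure"
  assumes "finite_measure M" and "sets M = sets borel"
    and "finite F" and "F \<subseteq> supp M" and "pairwise (\<lambda>x y. e \<le> dist x y) F"
  shows "real (card F) * inf_ball_mass M (e/2) \<le> measure M (space M)"
proof -
  interpret finite_measure M by fact
  have "disjoint_family_on (\<lambda>x. ball x (e/2)) F"
    using assms(5) by (auto simp: disjoint_family_on_def pairwise_def intro!: disjoint_ballI)
  have "real (card F) * inf_ball_mass M (e/2) = (\<Sum>x\<in>F. inf_ball_mass M (e/2))"
    by simp
  also have "\<dots> \<le> (\<Sum>x\<in>F. measure M (ball x (e/2)))"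
    using assms(4) inf_ball_mass_le by (intro sum_mono) blast
  also have "\<dots> = measure M (\<Union>x\<in>F. ball x (e/2))"
    using assms(2,3) \<open>disjoint_family_on _ F\<close>
    by (intro finite_measure_finite_Union[symmetric]) (simp_all add: image_subset_iff)
  also have "\<dots> \<le> measure M (space M)"
    using assms(2) by (intro bounded_measure)
  finally show ?thesis .
qed

lemma inf_ball_mass_pos_imp_compact_supp:
  fixes M :: "'a::complete_space measure"
  assumes "finite_measure M" and "sets M = sets borel"
    and "\<And>e. e > 0 \<Longrightarrow> inf_ball_mass M e > 0"
  shows "compact (supp M)"
proof -
  have "\<exists>K. finite K \<and> supp M \<subseteq> (\<Union>x\<in>K. ball x e)" if "e > 0" for e
  proof (rule finite_ball_cover_if_separated_card_bounded[OF that])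
    fix F assume F: "finite F" "F \<subseteq> supp M" "pairwise (\<lambda>x y. e \<le> dist x y) F"
    define d where "d = inf_ball_mass M (e/2)"
    have "d > 0"
      unfolding d_def using \<open>e > 0\<close> assms(3) by simp
    have "real (card F) * d \<le> measure M (space M)"
      unfolding d_def using card_separated_subset_supp_le[OF assms(1,2) F] .
    then have "real (card F) \<le> measure M (space M) / d"
      using \<open>d > 0\<close> by (simp add: pos_le_divide_eq)
    also have "\<dots> \<le> real (nat \<lceil>measure M (space M) / d\<rceil>)"
      by (rule real_nat_ceiling_ge)
    finally show "card F \<le> nat \<lceil>measure M (space M) / d\<rceil>"
      by (simp only: of_nat_le_iff)
  qed
  moreover have "Topological_Spaces.complete (supp M)"
    using closed_supp[OF assms(1,2)] complete_eq_closed by blast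
  ultimately show ?thesis
    unfolding compact_eq_totally_bounded by blast
qed

lemma prob_PiM_ex_component_in:
  assumes "prob_space M" and "finite I" and "A \<in> sets M"
  shows "\<P>(y in PiM I (\<lambda>_. M). \<exists>i\<in>I. y i \<in> A) = 1 - (1 - measure M A) ^ card I"
proof -
  interpret M: prob_space M by fact
  interpret P: finite_product_prob_space "\<lambda>_. M" I
    by unfold_locales (simp add: assms(2))
  have "{y \<in> space (PiM I (\<lambda>_. M)). \<exists>i\<in>I. y i \<in> A}
      = space (PiM I (\<lambda>_. M)) - (\<Pi>\<^sub>E i\<in>I. space M - A)"
    by (auto simp: space_PiM)
  also have "P.prob \<dots> = 1 - P.prob (\<Pi>\<^sub>E i\<in>I. space M - A)"
    using assms(2,3) by (intro P.prob_compl sets_PiM_I_finite) auto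
  also have "P.prob (\<Pi>\<^sub>E i\<in>I. space M - A) = (1 - measure M A) ^ card I"
    using assms(3) by (simp add: P.prob_times M.prob_compl)
  finally show ?thesis .
qed

lemma borel_measurable_ball_mass:
  fixes M :: "'a::{metric_space, second_countable_topology} measure"
  assumes "sigma_finite_measure M" and "sets M = sets borel"
  shows "(\<lambda>x. measure M (ball x e)) \<in> borel_measurable M"
proof -
  interpret sigma_finite_measure M by fact
  have [measurable_cong]: "sets (M \<Otimes>\<^sub>M M) = sets (borel \<Otimes>\<^sub>M borel)"
    using assms(2) by (intro sets_pair_measure_cong) auto
  define Q where "Q = {p \<in> space (M \<Otimes>\<^sub>M M). dist (fst p) (snd p) < e}"
  have "Q \<in> sets (M \<Otimes>\<^sub>M M)"
    unfolding Q_def by measurable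
  then have "(\<lambda>x. emeasure M (Pair x -` Q)) \<in> borel_measurable M"
    by (rule measurable_emeasure_Pair)
  moreover have "Pair x -` Q = ball x e" for x
    using sets_eq_imp_space_eq[OF assms(2)] by (auto simp: Q_def space_pair_measure)
  ultimately show ?thesis
    unfolding measure_def by simp
qed

lemma subcov_prob_eq_integral:
  fixes M :: "'a::{metric_space, second_countable_topology} measure"
  assumes "prob_space M" and "sets M = sets borel"
  shows "subcov_prob M e k = (\<integral>x. 1 - (1 - measure M (ball x e)) ^ k \<partial>M)"
proof -
  interpret prob_space M by fact
  interpret product_sigma_finite "\<lambda>_::nat. M"
    by unfold_locales
  let ?P = "PiM {0..k} (\<lambda>_. M)" and ?Q = "PiM {1..k} (\<lambda>_. M)"
  have space_M: "space M = UNIV"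
    using sets_eq_imp_space_eq[OF assms(2)] by simp
  have [measurable_cong]: "sets M = sets borel"
    by fact
  define A where "A = {\<omega> \<in> space ?P. \<exists>i\<in>{1..k}. dist (\<omega> i) (\<omega> 0) < e}"
  have A_sets: "A \<in> sets ?P"
    unfolding A_def by measurable
  have slice: "(\<integral>\<^sup>+y. indicator A (y(0 := x)) \<partial>?Q) = ennreal (1 - (1 - measure M (ball x e)) ^ k)" for x
  proof -
    interpret Q: prob_space ?Q
      by (intro prob_space_PiM assms(1))
    define C where "C = {y \<in> space ?Q. \<exists>i\<in>{1..k}. dist x (y i) < e}"
    have C_sets: "C \<in> sets ?Q"
      unfolding C_def by measurable
    have "indicator A (y(0 := x)) = (indicator C y :: ennreal)" if "y \<in> space ?Q" for y
      using that by (auto simp: A_def C_def space_PiM space_M PiE_def extensional_def dist_commute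
          split: split_indicator)
    then have "(\<integral>\<^sup>+y. indicator A (y(0 := x)) \<partial>?Q) = (\<integral>\<^sup>+y. indicator C y \<partial>?Q)"
      by (rule nn_integral_cong)
    also have "\<dots> = emeasure ?Q C"
      using C_sets by (rule nn_integral_indicator)
    also have "\<dots> = ennreal (Q.prob C)"
      by (rule Q.emeasure_eq_measure)
    also have "Q.prob C = 1 - (1 - measure M (ball x e)) ^ k"
      using prob_PiM_ex_component_in[OF assms(1), of "{1..k}" "ball x e"] assms(2)
      by (simp add: C_def)
    finally show ?thesis .
  qed
  have "{0..k} = insert 0 {1..k}"
    by auto
  then have "emeasure ?P A = (\<integral>\<^sup>+x. (\<integral>\<^sup>+y. indicator A (y(0 := x)) \<partial>?Q) \<partial>M)"
    using A_sets by (simp add: product_nn_integral_insert_rev[symmetric])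
  also have "\<dots> = (\<integral>\<^sup>+x. ennreal (1 - (1 - measure M (ball x e)) ^ k) \<partial>M)"
    by (simp only: slice)
  finally have "subcov_prob M e k = enn2real (\<integral>\<^sup>+x. ennreal (1 - (1 - measure M (ball x e)) ^ k) \<partial>M)"
    by (simp add: subcov_prob_def measure_def A_def)
  also have "\<dots> = (\<integral>x. 1 - (1 - measure M (ball x e)) ^ k \<partial>M)"
    using borel_measurable_ball_mass[OF sigma_finite_measure assms(2)]
    by (intro enn2real_nn_integral_eq_integral) (auto intro!: power_le_one)
  finally show ?thesis .
qed

lemma
  fixes f :: "'a \<Rightarrow> real"
  assumes "prob_space M" and "f \<in> borel_measurable M" and "\<And>x. x \<in> space M \<Longrightarrow> f x \<in> {0..1}"
  shows tendsto_integral_one_minus_power: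
      "(AE x in M. 0 < f x) \<Longrightarrow> (\<lambda>k. \<integral>x. 1 - (1 - f x) ^ k \<partial>M) \<longlonglongrightarrow> 1"
    and integral_one_minus_power_ge:
      "(AE x in M. c \<le> f x) \<Longrightarrow> 1 - (1 - c) ^ k \<le> (\<integral>x. 1 - (1 - f x) ^ k \<partial>M)"
proof -
  interpret prob_space M by fact
  have bounded: "\<bar>1 - (1 - f x) ^ k\<bar> \<le> 1" if "x \<in> space M" for x k
  proof -
    have "0 \<le> 1 - f x" and "1 - f x \<le> 1"
      using assms(3)[OF that] by auto
    then have "0 \<le> (1 - f x) ^ k" and "(1 - f x) ^ k \<le> 1"
      by (simp_all add: power_le_one)
    then show ?thesis
      by simp
  qed
  have integrable: "integrable M (\<lambda>x. 1 - (1 - f x) ^ k)" for k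
    using assms(2) bounded by (intro integrable_const_bound[where B=1]) auto
  show "(\<lambda>k. \<integral>x. 1 - (1 - f x) ^ k \<partial>M) \<longlonglongrightarrow> 1" if "AE x in M. 0 < f x"
  proof -
    have "(\<lambda>k. \<integral>x. 1 - (1 - f x) ^ k \<partial>M) \<longlonglongrightarrow> (\<integral>x. 1 \<partial>M)"
    proof (rule integral_dominated_convergence[where w="\<lambda>_. 1"])
      show "AE x in M. (\<lambda>k. 1 - (1 - f x) ^ k) \<longlonglongrightarrow> 1"
        using that AE_space
      proof eventually_elim
        case (elim x)
        then have "(\<lambda>k. (1 - f x) ^ k) \<longlonglongrightarrow> 0"
          using assms(3)[of x] by (intro LIMSEQ_power_zero) auto
        then show ?case
          by (auto intro: tendsto_eq_intros)
      qed
    qed (use assms(2) bounded in auto)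
    then show ?thesis
      by (simp add: prob_space)
  qed
  show "1 - (1 - c) ^ k \<le> (\<integral>x. 1 - (1 - f x) ^ k \<partial>M)" if "AE x in M. c \<le> f x"
  proof -
    have "(\<integral>x. 1 - (1 - c) ^ k \<partial>M) \<le> (\<integral>x. 1 - (1 - f x) ^ k \<partial>M)"
    proof (rule integral_mono_AE[OF _ integrable])
      show "AE x in M. 1 - (1 - c) ^ k \<le> 1 - (1 - f x) ^ k"
        using that AE_space
      proof eventually_elim
        case (elim x)
        then show ?case
          using assms(3) by (auto intro!: power_mono)
      qed
    qed simp
    then show ?thesis
      by (simp add: prob_space)
  qed
qed

theorem lemma3p8:
  fixes M :: "'a::polish_space measure"
  assumes "prob_space M" and "sets M = sets borel"
  shows "(\<forall>\<epsilon>>0. \<forall>k. 0 \<le> subcov_prob M \<epsilon> k \<and> subcov_prob M \<epsilon> k \<le> 1)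
    \<and> (\<forall>\<epsilon>>0. subcov_prob M \<epsilon> 0 = 0)
    \<and> (\<forall>\<epsilon>>0. subcov_prob M \<epsilon> 1 = (\<integral>x. measure M (ball x \<epsilon>) \<partial>M))
    \<and> (\<forall>\<epsilon>>0. (\<lambda>k. subcov_prob M \<epsilon> k) \<longlonglongrightarrow> 1)
    \<and> (compact (supp M) \<longleftrightarrow> (\<forall>\<epsilon>>0. inf_ball_mass M \<epsilon> > 0))
    \<and> (compact (supp M) \<longrightarrow>
         (\<forall>\<epsilon>>0. \<forall>k. subcov_prob M \<epsilon> k \<ge> 1 - (1 - inf_ball_mass M \<epsilon>) ^ k))"
proof -
  interpret prob_space M by fact
  note integral_form = subcov_prob_eq_integral[OF assms]
  note ball_mass = borel_measurable_ball_mass[OF sigma_finite_measure assms(2)]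
  have "0 \<le> subcov_prob M e k \<and> subcov_prob M e k \<le> 1" for e k
  proof -
    interpret P: prob_space "PiM {0..k} (\<lambda>_. M)"
      by (intro prob_space_PiM assms(1))
    show ?thesis
      by (simp add: subcov_prob_def)
  qed
  moreover have "(\<lambda>k. subcov_prob M e k) \<longlonglongrightarrow> 1" if "e > 0" for e
  proof -
    have "AE x in M. 0 < measure M (ball x e)"
      using AE_in_supp[OF finite_measure assms(2)]
      by eventually_elim (use \<open>e > 0\<close> in \<open>simp add: supp_def\<close>)
    then show ?thesis
      unfolding integral_form by (intro tendsto_integral_one_minus_power[OF assms(1) ball_mass]) simp_all
  qed
  moreover have "subcov_prob M e k \<ge> 1 - (1 - inf_ball_mass M e) ^ k" for e k
    \<comment> \<open>holds without compactness, which is only needed to make the infimum positive\<close>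
  proof -
    have "AE x in M. inf_ball_mass M e \<le> measure M (ball x e)"
      using AE_in_supp[OF finite_measure assms(2)] by eventually_elim (rule inf_ball_mass_le)
    then show ?thesis
      unfolding integral_form by (intro integral_one_minus_power_ge[OF assms(1) ball_mass]) simp_all
  qed
  moreover have "compact (supp M) \<longleftrightarrow> (\<forall>e>0. inf_ball_mass M e > 0)"
    using compact_supp_imp_inf_ball_mass_pos[OF finite_measure assms(2) _ supp_nonempty[OF assms]]
      inf_ball_mass_pos_imp_compact_supp[OF finite_measure assms(2)] by blast
  ultimately show ?thesis
    by (simp add: integral_form)
qed

end
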